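(* For all $n\ge1$ and all $k_1,\dots,k_n\in\mathbb N$, $H_{k_1}\circ\cdots\circ H_{k_n}(\partial\Delta)$ is the boundary of a triangle each of whose sides has negative slope.
   Context: $\Delta=\{(u,v)\in\mathbb R^2:u\ge0,v\ge0,u+v\le1\}$. For $k\in\mathbb N$, $H_k:\Delta\to\Delta$ is $H_k(u,v)=\frac{1}{k(1-v)+1-u}(v,1-v)$ (a projective map, sending line segments to line segments). A vertical side is regarded as having slope $-\infty$, which counts as negative. *)

theory Defs
  imports "HOL-Analysis.Analysis"
begin

definition Delta :: "(real \<times> real) set" where
  "Delta = {(u, v). u \<ge> 0 \<and> v \<ge> 0 \<and> u + v \<le> 1}"

definition H :: "nat \<Rightarrow> real \<times> real \<Rightarrow> real \<times> real" where
  "H k p = (let (u, v) = p; d = real k * (1 - v) + 1 - u in (v / d, (1 - v) / d))"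

definition Hcomp :: "nat list \<Rightarrow> real \<times> real \<Rightarrow> real \<times> real" where
  "Hcomp ks = foldr (\<lambda>k f. H k \<circ> f) ks id"

(* the side from p to q has negative slope; a vertical side has slope -infinity, counted negative *)
definition neg_slope :: "real \<times> real \<Rightarrow> real \<times> real \<Rightarrow> bool" where
  "neg_slope p q = (if fst p = fst q then snd p \<noteq> snd q
                    else (snd q - snd p) / (fst q - fst p) < 0)"

definition neg_slope_triangle_boundary :: "(real \<times> real) set \<Rightarrow> bool" where
  "neg_slope_triangle_boundary S = (\<exists>a b c. \<not> collinear {a, b, c} \<and>
      S = closed_segment a b \<union> closed_segment b c \<union> closed_segment c a \<and>
      neg_slope a b \<and> neg_slope b c \<and> neg_slope c a)"

end

theory Submission
  imports Defs
begin

(* In homogeneous coordinates H_k is a projective map (u, v, 1) |-> (v, 1 - v, k(1 - v) + 1 - u);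
   for k >= 1 its denominator is >= 1 on Delta, so H_k maps Delta injectively into itself and maps
   segments in Delta onto segments; an injective segment-preserving map cannot make three
   non-collinear points collinear.  Hence every composite maps the boundary of Delta onto the
   boundary of the non-degenerate triangle spanned by the images of the three vertices.
   For the slopes: H_k sends the line  a x + b y = c  to the line  (a + b - c) x + ((k+1) a - c) y = a.
   The lines with  0 <= c <= min a b  and  a + b > 0  include the three sides of Delta, are mapped to
   lines of the same kind, and every image line has a > 0 and b >= 0, so it is vertical or has
   negative slope. *)

lemma closed_segment_image_perspective:
  fixes N :: "'a::real_vector \<Rightarrow> 'b::real_vector" and d :: "'a \<Rightarrow> real"
  assumes N: "\<And>t. N ((1 - t) *\<^sub>R a + t *\<^sub>R b) = (1 - t) *\<^sub>R N a + t *\<^sub>R N b"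
    and d: "\<And>t. d ((1 - t) *\<^sub>R a + t *\<^sub>R b) = (1 - t) * d a + t * d b"
    and da: "0 < d a" and db: "0 < d b"
  shows "(\<lambda>x. N x /\<^sub>R d x) ` closed_segment a b = closed_segment (N a /\<^sub>R d a) (N b /\<^sub>R d b)"
proof -
  define D where "D t = (1 - t) * d a + t * d b" for t
  define \<phi> where "\<phi> t = t * d b / D t" for t
  have D_pos: "0 < D t" if "t \<in> {0..1}" for t
    using that da db unfolding D_def
    by (cases "t = 1") (auto intro: add_pos_nonneg add_nonneg_pos)
  have image_point: "N x /\<^sub>R d x = (1 - \<phi> t) *\<^sub>R (N a /\<^sub>R d a) + \<phi> t *\<^sub>R (N b /\<^sub>R d b)"
    if "x = (1 - t) *\<^sub>R a + t *\<^sub>R b" "t \<in> {0..1}" for x t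
  proof -
    have "1 - \<phi> t = (D t - t * d b) / D t"
      using D_pos[OF that(2)] by (simp add: \<phi>_def field_simps)
    then have "(1 - \<phi> t) / d a = (1 - t) / D t"
      using da by (simp add: D_def)
    moreover have "\<phi> t / d b = t / D t"
      using db by (simp add: \<phi>_def)
    moreover have "N x /\<^sub>R d x = ((1 - t) / D t) *\<^sub>R N a + (t / D t) *\<^sub>R N b"
      using that(1) by (simp add: N d D_def scaleR_add_right divide_inverse mult.commute)
    ultimately show ?thesis
      by (simp add: scaleR_add_right divide_inverse mult.commute)
  qed
  have \<phi>_range: "\<phi> ` {0..1} = {0..1}"
  proof
    show "\<phi> ` {0..1} \<subseteq> {0..1}"
      using D_pos da db by (auto simp: \<phi>_def D_def field_simps)
  next
    show "{0..1} \<subseteq> \<phi> ` {0..1}"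
    proof
      fix s :: real assume s: "s \<in> {0..1}"
      define E where "E = (1 - s) * d b + s * d a"
      define t where "t = s * d a / E"
      have E: "0 < E"
        using s da db unfolding E_def by (cases "s = 1") (auto intro: add_pos_nonneg add_nonneg_pos)
      have t: "t \<in> {0..1}"
        using s E da db by (auto simp: t_def E_def field_simps)
      have tE: "t * E = s * d a"
        using E by (simp add: t_def)
      have "D t * E = d a * E - (t * E) * d a + (t * E) * d b"
        by (simp add: D_def algebra_simps)
      also have "\<dots> = d a * d b"
        unfolding tE by (simp add: E_def algebra_simps)
      finally have DE: "D t * E = d a * d b" .
      have "\<phi> t = (t * E) * d b / (D t * E)"
        using E by (simp add: \<phi>_def)
      also have "\<dots> = s"
        unfolding tE DE using da db by simp
      finally have "\<phi> t = s" .
      then show "s \<in> \<phi> ` {0..1}" using t by force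
    qed
  qed
  have "(\<lambda>x. N x /\<^sub>R d x) ` closed_segment a b
      = (\<lambda>t. (1 - \<phi> t) *\<^sub>R (N a /\<^sub>R d a) + \<phi> t *\<^sub>R (N b /\<^sub>R d b)) ` {0..1}"
    unfolding closed_segment_image_interval image_image by (rule image_cong) (simp_all add: image_point)
  also have "\<dots> = (\<lambda>s. (1 - s) *\<^sub>R (N a /\<^sub>R d a) + s *\<^sub>R (N b /\<^sub>R d b)) ` \<phi> ` {0..1}"
    by (simp only: image_image)
  also have "\<dots> = closed_segment (N a /\<^sub>R d a) (N b /\<^sub>R d b)"
    unfolding \<phi>_range closed_segment_image_interval ..
  finally show ?thesis .
qed

lemma not_collinear_image:
  fixes f :: "'a::euclidean_space \<Rightarrow> 'b::euclidean_space"
  assumes "convex S" "inj_on f S"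
    and segments: "\<And>x y. x \<in> S \<Longrightarrow> y \<in> S \<Longrightarrow> closed_segment (f x) (f y) \<subseteq> f ` closed_segment x y"
    and "a \<in> S" "b \<in> S" "c \<in> S" "\<not> collinear {a, b, c}"
  shows "\<not> collinear {f a, f b, f c}"
proof
  have between_preimage: "between (x, y) z"
    if xyz: "x \<in> S" "y \<in> S" "z \<in> S" and "between (f x, f y) (f z)" for x y z
  proof -
    obtain w where w: "w \<in> closed_segment x y" "f w = f z"
      using segments[OF xyz(1,2)] \<open>between (f x, f y) (f z)\<close> by (auto simp: between_mem_segment)
    have "w \<in> S"
      using w(1) \<open>convex S\<close> xyz(1,2) closed_segment_subset by blast
    then have "w = z"
      using w(2) \<open>inj_on f S\<close> xyz(3) by (auto dest: inj_onD)
    then show ?thesis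
      using w(1) by (simp add: between_mem_segment)
  qed
  assume "collinear {f a, f b, f c}"
  then have "between (f b, f c) (f a) \<or> between (f c, f a) (f b) \<or> between (f a, f b) (f c)"
    by (simp add: collinear_between_cases)
  then have "between (b, c) a \<or> between (c, a) b \<or> between (a, b) c"
    using between_preimage[OF assms(5,6,4)] between_preimage[OF assms(6,4,5)]
      between_preimage[OF assms(4,5,6)] by blast
  then have "collinear {a, b, c}"
    by (simp add: collinear_between_cases)
  with assms(7) show False ..
qed

definition H_denom :: "nat \<Rightarrow> real \<times> real \<Rightarrow> real" where
  "H_denom k p = real k * (1 - snd p) + 1 - fst p"

lemma H_eq_divideR: "H k p = (snd p, 1 - snd p) /\<^sub>R H_denom k p"
  by (simp add: H_def H_denom_def case_prod_beta Let_def divide_inverse mult.commute)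

lemma fst_plus_snd_H: "fst (H k p) + snd (H k p) = 1 / H_denom k p"
  by (simp add: H_eq_divideR divide_inverse algebra_simps)

lemma H_denom_ge_1:
  assumes "p \<in> Delta" "1 \<le> k"
  shows "1 \<le> H_denom k p"
proof -
  have "1 * (1 - snd p) \<le> real k * (1 - snd p)"
    using assms by (intro mult_right_mono) (auto simp: Delta_def)
  then show ?thesis
    using assms by (auto simp: Delta_def H_denom_def)
qed

lemma H_in_Delta:
  assumes "p \<in> Delta" "1 \<le> k"
  shows "H k p \<in> Delta"
proof -
  have d: "1 \<le> H_denom k p"
    using H_denom_ge_1[OF assms] .
  have "fst (H k p) + snd (H k p) \<le> 1"
    using d by (simp add: fst_plus_snd_H)
  moreover have "0 \<le> fst (H k p)" "0 \<le> snd (H k p)"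
    using assms d by (auto simp: H_eq_divideR Delta_def)
  ultimately show ?thesis
    by (simp add: Delta_def case_prod_beta)
qed

lemma inj_on_H_Delta:
  assumes "1 \<le> k"
  shows "inj_on (H k) Delta"
proof
  fix p q assume p: "p \<in> Delta" and q: "q \<in> Delta" and eq: "H k p = H k q"
  have dp: "1 \<le> H_denom k p" and dq: "1 \<le> H_denom k q"
    using H_denom_ge_1 assms p q by auto
  have d: "H_denom k p = H_denom k q"
    using fst_plus_snd_H[of k p] fst_plus_snd_H[of k q] eq dp dq by simp
  have "snd p = snd q"
    using arg_cong[OF eq, of fst] d dp by (simp add: H_eq_divideR)
  moreover from this have "fst p = fst q"
    using d by (simp add: H_denom_def)
  ultimately show "p = q"
    by (simp add: prod_eq_iff)
qed

lemma H_image_closed_segment: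
  assumes "a \<in> Delta" "b \<in> Delta" "1 \<le> k"
  shows "H k ` closed_segment a b = closed_segment (H k a) (H k b)"
proof -
  have "H k = (\<lambda>x. (snd x, 1 - snd x) /\<^sub>R H_denom k x)"
    by (simp add: H_eq_divideR fun_eq_iff)
  moreover have "(\<lambda>x. (snd x, 1 - snd x) /\<^sub>R H_denom k x) ` closed_segment a b
      = closed_segment ((snd a, 1 - snd a) /\<^sub>R H_denom k a) ((snd b, 1 - snd b) /\<^sub>R H_denom k b)"
    using H_denom_ge_1[OF assms(1,3)] H_denom_ge_1[OF assms(2,3)]
    by (intro closed_segment_image_perspective) (auto simp: H_denom_def algebra_simps)
  ultimately show ?thesis
    by (simp add: H_eq_divideR)
qed

lemma Hcomp_Nil [simp]: "Hcomp [] = id"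
  by (simp add: Hcomp_def)

lemma Hcomp_Cons [simp]: "Hcomp (k # ks) = H k \<circ> Hcomp ks"
  by (simp add: Hcomp_def)

lemma Hcomp_in_Delta: "\<forall>k\<in>set ks. 1 \<le> k \<Longrightarrow> p \<in> Delta \<Longrightarrow> Hcomp ks p \<in> Delta"
  by (induction ks) (auto simp: H_in_Delta)

lemma inj_on_Hcomp_Delta: "\<forall>k\<in>set ks. 1 \<le> k \<Longrightarrow> inj_on (Hcomp ks) Delta"
proof (induction ks)
  case (Cons k ks)
  have "inj_on (H k) (Hcomp ks ` Delta)"
    using inj_on_H_Delta Cons.prems Hcomp_in_Delta by (force intro: inj_on_subset)
  moreover have "inj_on (Hcomp ks) Delta"
    using Cons by simp
  ultimately show ?case
    by (simp only: Hcomp_Cons comp_inj_on)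
qed simp

lemma Hcomp_image_closed_segment:
  assumes "\<forall>k\<in>set ks. 1 \<le> k" "a \<in> Delta" "b \<in> Delta"
  shows "Hcomp ks ` closed_segment a b = closed_segment (Hcomp ks a) (Hcomp ks b)"
  using assms
proof (induction ks)
  case (Cons k ks)
  have "Hcomp (k # ks) ` closed_segment a b = H k ` Hcomp ks ` closed_segment a b"
    by (simp add: image_comp)
  also have "\<dots> = H k ` closed_segment (Hcomp ks a) (Hcomp ks b)"
    using Cons by simp
  also have "\<dots> = closed_segment (Hcomp (k # ks) a) (Hcomp (k # ks) b)"
    using Cons.prems by (simp add: H_image_closed_segment Hcomp_in_Delta)
  finally show ?case .
qed simp

lemma Delta_eq_convex_hull: "Delta = convex hull {(0, 0), (1, 0), (0, 1)}"
  by (auto simp: Delta_def convex_hull_3_alt)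

lemma convex_Delta: "convex Delta"
  by (simp add: Delta_eq_convex_hull)

lemma frontier_Delta:
  "frontier Delta = closed_segment (0, 0) (1, 0) \<union> closed_segment (1, 0) (0, 1) \<union> closed_segment (0, 1) (0, 0)"
  unfolding Delta_eq_convex_hull by (rule frontier_of_triangle) simp

lemma not_collinear_Delta_vertices: "\<not> collinear {(0, 0), (1, 0), (0 :: real, 1 :: real)}"
proof -
  have "\<not> collinear {0, (1, 0), (0 :: real, 1 :: real)}"
    by (auto simp: collinear_lemma prod_eq_iff)
  then show ?thesis
    by (simp add: zero_prod_def)
qed

lemma Hcomp_image_frontier_Delta:
  assumes "\<forall>k\<in>set ks. 1 \<le> k"
  shows "Hcomp ks ` frontier Delta = closed_segment (Hcomp ks (0, 0)) (Hcomp ks (1, 0))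
    \<union> closed_segment (Hcomp ks (1, 0)) (Hcomp ks (0, 1)) \<union> closed_segment (Hcomp ks (0, 1)) (Hcomp ks (0, 0))"
proof -
  have "(0, 0) \<in> Delta" "(1, 0) \<in> Delta" "(0, 1) \<in> Delta"
    by (simp_all add: Delta_def)
  then show ?thesis
    using assms by (simp add: frontier_Delta image_Un Hcomp_image_closed_segment)
qed

lemma H_on_line:
  assumes "H_denom k p \<noteq> 0" "\<alpha> * fst p + \<beta> * snd p = \<gamma>"
  shows "(\<alpha> + \<beta> - \<gamma>) * fst (H k p) + ((real k + 1) * \<alpha> - \<gamma>) * snd (H k p) = \<alpha>"
proof -
  have "(\<alpha> + \<beta> - \<gamma>) * fst (H k p) + ((real k + 1) * \<alpha> - \<gamma>) * snd (H k p)
      = ((\<alpha> + \<beta> - \<gamma>) * snd p + ((real k + 1) * \<alpha> - \<gamma>) * (1 - snd p)) / H_denom k p"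
    by (simp add: H_eq_divideR divide_inverse algebra_simps)
  also have "\<dots> = \<alpha> * H_denom k p / H_denom k p"
    using assms(2) by (simp add: H_denom_def algebra_simps)
  finally show ?thesis
    using assms(1) by simp
qed

definition admissible_line :: "real \<Rightarrow> real \<Rightarrow> real \<Rightarrow> bool" where
  "admissible_line \<alpha> \<beta> \<gamma> \<longleftrightarrow> 0 \<le> \<gamma> \<and> \<gamma> \<le> \<alpha> \<and> \<gamma> \<le> \<beta> \<and> 0 < \<alpha> + \<beta>"

lemma admissible_line_H:
  assumes "admissible_line \<alpha> \<beta> \<gamma>" "1 \<le> k"
  shows "admissible_line (\<alpha> + \<beta> - \<gamma>) ((real k + 1) * \<alpha> - \<gamma>) \<alpha>" and "0 < \<alpha> + \<beta> - \<gamma>"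
proof -
  have "\<alpha> \<le> real k * \<alpha>"
    using assms by (simp add: admissible_line_def mult_le_cancel_right1)
  then show "admissible_line (\<alpha> + \<beta> - \<gamma>) ((real k + 1) * \<alpha> - \<gamma>) \<alpha>"
    using assms by (auto simp: admissible_line_def algebra_simps)
  show "0 < \<alpha> + \<beta> - \<gamma>"
    using assms by (cases "\<alpha> = 0") (auto simp: admissible_line_def)
qed

lemma Hcomp_admissible_line:
  assumes "\<forall>k\<in>set ks. 1 \<le> k" "admissible_line \<alpha> \<beta> \<gamma>"
  shows "\<exists>\<alpha>' \<beta>' \<gamma>'. admissible_line \<alpha>' \<beta>' \<gamma>' \<and> (ks \<noteq> [] \<longrightarrow> 0 < \<alpha>') \<and>
    (\<forall>p\<in>Delta. \<alpha> * fst p + \<beta> * snd p = \<gamma> \<longrightarrow> \<alpha>' * fst (Hcomp ks p) + \<beta>' * snd (Hcomp ks p) = \<gamma>')"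
  using assms(1)
proof (induction ks)
  case Nil
  then show ?case
    using assms(2) by auto
next
  case (Cons k ks)
  then obtain \<alpha>' \<beta>' \<gamma>' where adm: "admissible_line \<alpha>' \<beta>' \<gamma>'"
    and line: "\<forall>p\<in>Delta. \<alpha> * fst p + \<beta> * snd p = \<gamma> \<longrightarrow> \<alpha>' * fst (Hcomp ks p) + \<beta>' * snd (Hcomp ks p) = \<gamma>'"
    by auto
  have k: "1 \<le> k" and ks: "\<forall>k\<in>set ks. 1 \<le> k"
    using Cons.prems by auto
  show ?case
  proof (intro exI conjI)
    show "admissible_line (\<alpha>' + \<beta>' - \<gamma>') ((real k + 1) * \<alpha>' - \<gamma>') \<alpha>'"
      "k # ks \<noteq> [] \<longrightarrow> 0 < \<alpha>' + \<beta>' - \<gamma>'"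
      using admissible_line_H[OF adm k] by simp_all
    show "\<forall>p\<in>Delta. \<alpha> * fst p + \<beta> * snd p = \<gamma> \<longrightarrow>
      (\<alpha>' + \<beta>' - \<gamma>') * fst (Hcomp (k # ks) p) + ((real k + 1) * \<alpha>' - \<gamma>') * snd (Hcomp (k # ks) p) = \<alpha>'"
    proof (intro ballI impI)
      fix p assume "p \<in> Delta" "\<alpha> * fst p + \<beta> * snd p = \<gamma>"
      moreover from this have "1 \<le> H_denom k (Hcomp ks p)"
        using H_denom_ge_1 Hcomp_in_Delta k ks by blast
      ultimately show "(\<alpha>' + \<beta>' - \<gamma>') * fst (Hcomp (k # ks) p) + ((real k + 1) * \<alpha>' - \<gamma>') * snd (Hcomp (k # ks) p) = \<alpha>'"
        using line H_on_line by simp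
    qed
  qed
qed

lemma neg_slope_if_on_line:
  assumes "0 < \<alpha>" "0 \<le> \<beta>" "p \<noteq> q"
    and "\<alpha> * fst p + \<beta> * snd p = \<gamma>" "\<alpha> * fst q + \<beta> * snd q = \<gamma>"
  shows "neg_slope p q"
proof (cases "fst p = fst q")
  case True
  then show ?thesis
    using assms(3) by (simp add: neg_slope_def prod_eq_iff)
next
  case False
  have line: "\<beta> * (snd q - snd p) = - \<alpha> * (fst q - fst p)"
    using assms(4,5) by (simp add: algebra_simps)
  with False assms(1,2) have "0 < \<beta>"
    by (cases "\<beta> = 0") auto
  with line False have "(snd q - snd p) / (fst q - fst p) = - \<alpha> / \<beta>"
    by (simp add: field_simps)
  then show ?thesis
    using False assms(1) \<open>0 < \<beta>\<close> by (simp add: neg_slope_def)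
qed

lemma neg_slope_Hcomp:
  assumes "ks \<noteq> []" "\<forall>k\<in>set ks. 1 \<le> k" "admissible_line \<alpha> \<beta> \<gamma>"
    and "p \<in> Delta" "q \<in> Delta" "\<alpha> * fst p + \<beta> * snd p = \<gamma>" "\<alpha> * fst q + \<beta> * snd q = \<gamma>"
    and "Hcomp ks p \<noteq> Hcomp ks q"
  shows "neg_slope (Hcomp ks p) (Hcomp ks q)"
proof -
  obtain \<alpha>' \<beta>' \<gamma>' where "admissible_line \<alpha>' \<beta>' \<gamma>'" "0 < \<alpha>'"
    "\<forall>p\<in>Delta. \<alpha> * fst p + \<beta> * snd p = \<gamma> \<longrightarrow> \<alpha>' * fst (Hcomp ks p) + \<beta>' * snd (Hcomp ks p) = \<gamma>'"
    using Hcomp_admissible_line[OF assms(2,3)] assms(1) by blast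
  then show ?thesis
    using assms(4-8) by (intro neg_slope_if_on_line[of \<alpha>' \<beta>']) (auto simp: admissible_line_def)
qed

theorem proposition3p5:
  fixes ks :: "nat list"
  assumes "ks \<noteq> []" and "\<forall>k\<in>set ks. k \<ge> 1"
  shows "neg_slope_triangle_boundary (Hcomp ks ` frontier Delta)"
proof -
  define A B C :: "real \<times> real" where "A = (0, 0)" and "B = (1, 0)" and "C = (0, 1)"
  have vertices: "A \<in> Delta" "B \<in> Delta" "C \<in> Delta"
    by (auto simp: A_def B_def C_def Delta_def)
  have nc: "\<not> collinear {Hcomp ks A, Hcomp ks B, Hcomp ks C}"
    using assms(2) vertices Hcomp_image_closed_segment not_collinear_Delta_vertices
    by (intro not_collinear_image[OF convex_Delta inj_on_Hcomp_Delta]) (auto simp: A_def B_def C_def)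
  then have distinct: "Hcomp ks A \<noteq> Hcomp ks B" "Hcomp ks B \<noteq> Hcomp ks C" "Hcomp ks C \<noteq> Hcomp ks A"
    by (auto simp: insert_commute)
  have "neg_slope (Hcomp ks A) (Hcomp ks B)"
    by (rule neg_slope_Hcomp[OF assms, of 0 1 0])
      (use vertices distinct in \<open>auto simp: A_def B_def admissible_line_def\<close>)
  moreover have "neg_slope (Hcomp ks B) (Hcomp ks C)"
    by (rule neg_slope_Hcomp[OF assms, of 1 1 1])
      (use vertices distinct in \<open>auto simp: B_def C_def admissible_line_def\<close>)
  moreover have "neg_slope (Hcomp ks C) (Hcomp ks A)"
    by (rule neg_slope_Hcomp[OF assms, of 1 0 0])
      (use vertices distinct in \<open>auto simp: C_def A_def admissible_line_def\<close>)
  moreover have "Hcomp ks ` frontier Delta = closed_segment (Hcomp ks A) (Hcomp ks B)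
      \<union> closed_segment (Hcomp ks B) (Hcomp ks C) \<union> closed_segment (Hcomp ks C) (Hcomp ks A)"
    unfolding A_def B_def C_def by (rule Hcomp_image_frontier_Delta[OF assms(2)])
  ultimately show ?thesis
    unfolding neg_slope_triangle_boundary_def using nc by blast
qed

end
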